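(* For integers $d\ge1$ and $s\ge0$, let $G_s^d$ be the number of lattice paths with unit steps $(1,0)$ and $(0,1)$ from $(0,0)$ to $(s,s+d)$ all of whose points other than the endpoint satisfy $x-2<y<x+d$ (the endpoint lies on $y=x+d$). Then for every $\alpha\in(0,1/2)$, $$\sum_{s=0}^\infty G_s^d\,\big(\alpha(1-\alpha)\big)^s=\frac{1-2\alpha}{(1-\alpha)^{d+2}-\alpha^{d+2}},$$ $$\sum_{s=0}^\infty s\,G_s^d\,\big(\alpha(1-\alpha)\big)^s=\frac{(d+2)\alpha(1-\alpha)\big((1-\alpha)^{d+1}+\alpha^{d+1}\big)}{\big((1-\alpha)^{d+2}-\alpha^{d+2}\big)^2}-\frac{2\alpha(1-\alpha)}{(1-2\alpha)\big((1-\alpha)^{d+2}-\alpha^{d+2}\big)}.$$ *)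

theory Defs
  imports Complex_Main
begin

text \<open>A lattice path is a list of unit steps: True = (0,1) (up), False = (1,0) (right).
  The point reached after the first k steps is (number of right steps, number of up steps)
  among the first k steps.\<close>

definition path_pt :: "bool list \<Rightarrow> nat \<Rightarrow> int \<times> int" where
  "path_pt ps k = (int (length (filter Not (take k ps))), int (length (filter id (take k ps))))"

definition G_paths :: "nat \<Rightarrow> nat \<Rightarrow> bool list set" where
  "G_paths d s = {ps. length ps = 2 * s + d \<and> path_pt ps (length ps) = (int s, int (s + d)) \<and>
      (\<forall>k < length ps. fst (path_pt ps k) - 2 < snd (path_pt ps k) \<and>
                        snd (path_pt ps k) < fst (path_pt ps k) + int d)}"

definition G :: "nat \<Rightarrow> nat \<Rightarrow> nat" where
  "G d s = card (G_paths d s)"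

end

theory Submission
  imports Defs
begin

(* Read a lattice path as a walk whose height y - x goes up with probability p = 1 - \<alpha> and down
   with probability q = \<alpha>, killed when it leaves the strip -1 \<le> y - x \<le> d - 1. The paths counted
   by G d s are exactly the walks killed through the top at step 2s + d, each of weight
   p^d (pq)^s, so the first series is p^-d times the probability of leaving through the top.
   That probability is the gambler's ruin value (1 - r^2) / (1 - r^(d+2)), r = q/p: the walk is
   killed almost surely because its height has drift p - q > 0 on a bounded strip, and
   r^height is a martingale. With F the power series of the G d s, the second series is x F'(x)
   at x = \<alpha>(1 - \<alpha>), and F'(x) comes from differentiating the first identity in \<alpha>. *)

definition height :: "bool list \<Rightarrow> int" where
  "height ps = int (length (filter id ps)) - int (length (filter Not ps))"

definition stays_in :: "int \<Rightarrow> int \<Rightarrow> bool list \<Rightarrow> bool" where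
  "stays_in lo hi ps \<longleftrightarrow> (\<forall>k\<le>length ps. height (take k ps) \<in> {lo..hi})"

definition confined_paths :: "int \<Rightarrow> int \<Rightarrow> nat \<Rightarrow> int \<Rightarrow> bool list set" where
  "confined_paths lo hi n z = {ps. length ps = n \<and> stays_in lo hi ps \<and> height ps = z}"

definition path_weight :: "real \<Rightarrow> real \<Rightarrow> bool list \<Rightarrow> real" where
  "path_weight p q ps = p ^ length (filter id ps) * q ^ length (filter Not ps)"

(* For p + q = 1: the probability that the walk started at height 0 is at height z after n steps
   without ever having left [lo..hi]. *)
definition confined_weight :: "int \<Rightarrow> int \<Rightarrow> real \<Rightarrow> real \<Rightarrow> nat \<Rightarrow> int \<Rightarrow> real" where
  "confined_weight lo hi p q n z = (\<Sum>ps\<in>confined_paths lo hi n z. path_weight p q ps)"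

definition confined_sum :: "int \<Rightarrow> int \<Rightarrow> real \<Rightarrow> real \<Rightarrow> nat \<Rightarrow> (int \<Rightarrow> real) \<Rightarrow> real" where
  "confined_sum lo hi p q n \<phi> = (\<Sum>z\<in>{lo..hi}. confined_weight lo hi p q n z * \<phi> z)"

lemma height_snoc: "height (ps @ [b]) = height ps + (if b then 1 else -1)"
  by (cases b) (auto simp: height_def)

lemma length_eq_height: "int (length ps) = 2 * int (length (filter Not ps)) + height ps"
  using sum_length_filter_compl[of id ps] by (simp add: height_def)

lemma stays_in_height: "stays_in lo hi ps \<Longrightarrow> height ps \<in> {lo..hi}"
  unfolding stays_in_def by (metis order_refl take_all)

lemma stays_in_Nil: "stays_in lo hi [] \<longleftrightarrow> lo \<le> 0 \<and> 0 \<le> hi"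
  by (simp add: stays_in_def height_def)

lemma stays_in_snoc:
  "stays_in lo hi (ps @ [b]) \<longleftrightarrow> stays_in lo hi ps \<and> height (ps @ [b]) \<in> {lo..hi}"
proof (intro iffI conjI)
  assume ok: "stays_in lo hi (ps @ [b])"
  then show "height (ps @ [b]) \<in> {lo..hi}" by (rule stays_in_height)
  show "stays_in lo hi ps" unfolding stays_in_def
  proof (intro allI impI)
    fix k assume "k \<le> length ps"
    then have "take k (ps @ [b]) = take k ps" "k \<le> length (ps @ [b])" by simp_all
    with ok show "height (take k ps) \<in> {lo..hi}" unfolding stays_in_def by metis
  qed
next
  assume "stays_in lo hi ps \<and> height (ps @ [b]) \<in> {lo..hi}"
  then show "stays_in lo hi (ps @ [b])"
    unfolding stays_in_def by (auto simp: le_Suc_eq)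
qed

lemma finite_confined_paths: "finite (confined_paths lo hi n z)"
  by (rule finite_subset[OF _ finite_lists_length_eq[of "UNIV :: bool set" n]])
     (auto simp: confined_paths_def)

lemma confined_paths_outside: "z \<notin> {lo..hi} \<Longrightarrow> confined_paths lo hi n z = {}"
  by (auto simp: confined_paths_def dest: stays_in_height)

lemma confined_paths_Suc:
  assumes "z \<in> {lo..hi}"
  shows "confined_paths lo hi (Suc n) z =
    (\<lambda>ps. ps @ [True]) ` confined_paths lo hi n (z - 1) \<union>
    (\<lambda>ps. ps @ [False]) ` confined_paths lo hi n (z + 1)"
proof (intro equalityI subsetI)
  fix xs assume xs: "xs \<in> confined_paths lo hi (Suc n) z"
  then have "length xs = Suc n" by (simp add: confined_paths_def)
  then obtain ps b where xs_eq: "xs = ps @ [b]" by (auto simp: length_Suc_conv_rev)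
  have "ps \<in> confined_paths lo hi n (if b then z - 1 else z + 1)"
    using xs by (auto simp: xs_eq confined_paths_def stays_in_snoc height_snoc)
  then show "xs \<in> (\<lambda>ps. ps @ [True]) ` confined_paths lo hi n (z - 1) \<union>
    (\<lambda>ps. ps @ [False]) ` confined_paths lo hi n (z + 1)"
    unfolding xs_eq by (cases b) auto
next
  fix xs assume "xs \<in> (\<lambda>ps. ps @ [True]) ` confined_paths lo hi n (z - 1) \<union>
    (\<lambda>ps. ps @ [False]) ` confined_paths lo hi n (z + 1)"
  then show "xs \<in> confined_paths lo hi (Suc n) z"
    using assms by (auto simp: confined_paths_def stays_in_snoc height_snoc)
qed

lemma path_weight_snoc: "path_weight p q (ps @ [b]) = path_weight p q ps * (if b then p else q)"
  by (cases b) (auto simp: path_weight_def)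

lemma confined_weight_outside: "z \<notin> {lo..hi} \<Longrightarrow> confined_weight lo hi p q n z = 0"
  by (simp add: confined_weight_def confined_paths_outside)

lemma confined_weight_Suc:
  assumes "z \<in> {lo..hi}"
  shows "confined_weight lo hi p q (Suc n) z =
    p * confined_weight lo hi p q n (z - 1) + q * confined_weight lo hi p q n (z + 1)"
proof -
  have inj: "inj_on (\<lambda>ps. ps @ [b]) A" for b :: bool and A by (auto simp: inj_on_def)
  have "confined_weight lo hi p q (Suc n) z =
      (\<Sum>ps\<in>(\<lambda>ps. ps @ [True]) ` confined_paths lo hi n (z - 1). path_weight p q ps) +
      (\<Sum>ps\<in>(\<lambda>ps. ps @ [False]) ` confined_paths lo hi n (z + 1). path_weight p q ps)"
    unfolding confined_weight_def confined_paths_Suc[OF assms]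
    by (rule sum.union_disjoint) (auto simp: finite_confined_paths)
  then show ?thesis
    by (simp add: sum.reindex[OF inj] confined_weight_def path_weight_snoc sum_distrib_left
        mult.commute)
qed

lemma confined_weight_0:
  assumes "lo \<le> 0" "0 \<le> hi"
  shows "confined_weight lo hi p q 0 z = (if z = 0 then 1 else 0)"
proof -
  have "confined_paths lo hi 0 z = (if z = 0 then {[]} else {})"
    using assms by (auto simp: confined_paths_def stays_in_Nil height_def)
  then show ?thesis by (simp add: confined_weight_def path_weight_def)
qed

lemma confined_weight_nonneg: "0 \<le> p \<Longrightarrow> 0 \<le> q \<Longrightarrow> 0 \<le> confined_weight lo hi p q n z"
  unfolding confined_weight_def path_weight_def by (intro sum_nonneg) auto

lemma sum_Icc_int_shift:
  fixes f :: "int \<Rightarrow> 'a::comm_monoid_add"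
  assumes "lo \<le> hi + 1"
  shows "(\<Sum>z\<in>{lo..hi}. f (z + 1)) + f lo = f (hi + 1) + (\<Sum>z\<in>{lo..hi}. f z)"
proof -
  have "(\<Sum>z\<in>{lo..hi}. f (z + 1)) = (\<Sum>z\<in>{lo+1..hi+1}. f z)"
    by (rule sum.reindex_bij_witness[of _ "\<lambda>z. z - 1" "\<lambda>z. z + 1"]) auto
  also have "\<dots> + f lo = (\<Sum>z\<in>{lo..hi+1}. f z)"
  proof -
    have "{lo..hi+1} = insert lo {lo+1..hi+1}" using assms by auto
    then show ?thesis by (simp add: add.commute)
  qed
  also have "\<dots> = f (hi + 1) + (\<Sum>z\<in>{lo..hi}. f z)"
  proof -
    have "{lo..hi+1} = insert (hi+1) {lo..hi}" using assms by auto
    then show ?thesis by simp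
  qed
  finally show ?thesis .
qed

lemma confined_sum_0:
  assumes "lo \<le> 0" "0 \<le> hi"
  shows "confined_sum lo hi p q 0 \<phi> = \<phi> 0"
proof -
  have "confined_sum lo hi p q 0 \<phi> = (\<Sum>z\<in>{lo..hi}. if z = 0 then \<phi> z else 0)"
    unfolding confined_sum_def using assms by (intro sum.cong) (auto simp: confined_weight_0)
  also have "\<dots> = \<phi> 0" using assms by simp
  finally show ?thesis .
qed

lemma confined_sum_Suc:
  assumes "lo \<le> hi"
    and harmonic: "\<And>z. z \<in> {lo..hi} \<Longrightarrow> p * \<phi> (z + 1) + q * \<phi> (z - 1) = \<phi> z + c"
  shows "confined_sum lo hi p q (Suc n) \<phi> =
    confined_sum lo hi p q n \<phi> + c * confined_sum lo hi p q n (\<lambda>_. 1)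
    - p * confined_weight lo hi p q n hi * \<phi> (hi + 1)
    - q * confined_weight lo hi p q n lo * \<phi> (lo - 1)"
proof -
  let ?w = "confined_weight lo hi p q n"
  have "?w (lo - 1) = 0" "?w (hi + 1) = 0" by (simp_all add: confined_weight_outside)
  then have up: "(\<Sum>z\<in>{lo..hi}. ?w (z - 1) * \<phi> z) =
      (\<Sum>z\<in>{lo..hi}. ?w z * \<phi> (z + 1)) - ?w hi * \<phi> (hi + 1)"
    and down: "(\<Sum>z\<in>{lo..hi}. ?w (z + 1) * \<phi> z) =
      (\<Sum>z\<in>{lo..hi}. ?w z * \<phi> (z - 1)) - ?w lo * \<phi> (lo - 1)"
    using sum_Icc_int_shift[of lo hi "\<lambda>y. ?w (y - 1) * \<phi> y"]
      sum_Icc_int_shift[of lo hi "\<lambda>y. ?w y * \<phi> (y - 1)"] assms(1)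
    by (simp_all add: algebra_simps)
  have "confined_sum lo hi p q (Suc n) \<phi> =
      (\<Sum>z\<in>{lo..hi}. (p * ?w (z - 1) + q * ?w (z + 1)) * \<phi> z)"
    unfolding confined_sum_def by (intro sum.cong) (auto simp: confined_weight_Suc)
  also have "\<dots> =
      p * (\<Sum>z\<in>{lo..hi}. ?w (z - 1) * \<phi> z) + q * (\<Sum>z\<in>{lo..hi}. ?w (z + 1) * \<phi> z)"
    by (simp add: sum.distrib sum_distrib_left algebra_simps)
  also have "\<dots> = (\<Sum>z\<in>{lo..hi}. ?w z * (p * \<phi> (z + 1) + q * \<phi> (z - 1)))
      - p * ?w hi * \<phi> (hi + 1) - q * ?w lo * \<phi> (lo - 1)"
    unfolding up down by (simp add: sum.distrib sum_distrib_left algebra_simps)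
  also have "(\<Sum>z\<in>{lo..hi}. ?w z * (p * \<phi> (z + 1) + q * \<phi> (z - 1))) =
      (\<Sum>z\<in>{lo..hi}. ?w z * \<phi> z) + c * (\<Sum>z\<in>{lo..hi}. ?w z)"
    using harmonic by (simp add: sum.distrib sum_distrib_left algebra_simps)
  finally show ?thesis unfolding confined_sum_def by simp
qed

lemma abs_confined_sum_le:
  assumes "0 \<le> p" "0 \<le> q"
  shows "\<bar>confined_sum lo hi p q n \<phi>\<bar> \<le>
    (\<Sum>z\<in>{lo..hi}. \<bar>\<phi> z\<bar>) * confined_sum lo hi p q n (\<lambda>_. 1)"
proof -
  let ?C = "\<Sum>z\<in>{lo..hi}. \<bar>\<phi> z\<bar>"
  have "\<bar>confined_sum lo hi p q n \<phi>\<bar> \<le> (\<Sum>z\<in>{lo..hi}. \<bar>confined_weight lo hi p q n z * \<phi> z\<bar>)"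
    unfolding confined_sum_def by (rule sum_abs)
  also have "\<dots> \<le> (\<Sum>z\<in>{lo..hi}. confined_weight lo hi p q n z * ?C)"
    using confined_weight_nonneg[OF assms]
    by (intro sum_mono) (auto simp: abs_mult intro!: mult_left_mono member_le_sum)
  finally show ?thesis unfolding confined_sum_def by (simp add: sum_distrib_left mult.commute)
qed

context
  fixes lo hi :: int and p q :: real
  assumes lo_nonpos: "lo \<le> 0" and hi_nonneg: "0 \<le> hi"
    and q_pos: "0 < q" and q_less_p: "q < p" and p_plus_q: "p + q = 1"
begin

abbreviation survival :: "nat \<Rightarrow> real" where
  "survival n \<equiv> confined_sum lo hi p q n (\<lambda>_. 1)"

abbreviation exit_top :: "nat \<Rightarrow> real" where
  "exit_top n \<equiv> p * confined_weight lo hi p q n hi"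

abbreviation exit_bottom :: "nat \<Rightarrow> real" where
  "exit_bottom n \<equiv> q * confined_weight lo hi p q n lo"

lemma exit_top_nonneg: "0 \<le> exit_top n" and exit_bottom_nonneg: "0 \<le> exit_bottom n"
  using q_pos q_less_p confined_weight_nonneg[of p q lo hi n] by simp_all

lemma survival_nonneg: "0 \<le> survival n"
  unfolding confined_sum_def using q_pos q_less_p confined_weight_nonneg[of p q lo hi n]
  by (intro sum_nonneg) simp

lemma survival_Suc: "survival (Suc n) = survival n - exit_top n - exit_bottom n"
  using confined_sum_Suc[of lo hi p "\<lambda>_. 1" q 0 n] lo_nonpos hi_nonneg p_plus_q by simp

lemma survival_eq: "survival n = 1 - (\<Sum>k<n. exit_top k + exit_bottom k)"
  by (induction n) (simp_all add: survival_Suc confined_sum_0 lo_nonpos hi_nonneg)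

lemma confined_sum_height:
  "confined_sum lo hi p q n of_int =
     (p - q) * (\<Sum>k<n. survival k) - of_int (hi + 1) * (\<Sum>k<n. exit_top k)
     - of_int (lo - 1) * (\<Sum>k<n. exit_bottom k)"
proof (induction n)
  case 0
  then show ?case by (simp add: confined_sum_0 lo_nonpos hi_nonneg)
next
  case (Suc n)
  have "p * of_int (z + 1) + q * of_int (z - 1) = (p + q) * of_int z + (p - q)" for z
    by (simp add: algebra_simps)
  then have "confined_sum lo hi p q (Suc n) of_int = confined_sum lo hi p q n of_int
      + (p - q) * survival n - exit_top n * of_int (hi + 1) - exit_bottom n * of_int (lo - 1)"
    using confined_sum_Suc[of lo hi p of_int q "p - q" n] lo_nonpos hi_nonneg p_plus_q by simp
  with Suc show ?case by (simp add: algebra_simps)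
qed

(* The expected lifetime is finite: the bounded potential z gains p - q > 0 per surviving step. *)
lemma summable_survival: "summable survival"
proof (rule summableI_nonneg_bounded)
  show "0 \<le> survival n" for n by (rule survival_nonneg)
  let ?C = "\<Sum>z\<in>{lo..hi}. \<bar>real_of_int z\<bar>"
  fix n
  have exits_bottom: "0 \<le> (\<Sum>k<n. exit_bottom k)"
    using exit_bottom_nonneg by (intro sum_nonneg)
  have "(\<Sum>k<n. exit_top k) \<le> (\<Sum>k<n. exit_top k + exit_bottom k)"
    using exit_bottom_nonneg by (intro sum_mono) simp
  then have exits_top: "(\<Sum>k<n. exit_top k) \<le> 1"
    using survival_eq[of n] survival_nonneg[of n] by linarith
  have "0 \<le> (\<Sum>k<n. exit_top k + exit_bottom k)"
    using exit_top_nonneg exit_bottom_nonneg by (intro sum_nonneg add_nonneg_nonneg)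
  then have "survival n \<le> 1" using survival_eq[of n] by linarith
  have "confined_sum lo hi p q n of_int \<le> ?C * survival n"
    using abs_confined_sum_le[of p q lo hi n of_int] q_pos q_less_p by simp
  also have "\<dots> \<le> ?C"
    using \<open>survival n \<le> 1\<close> by (intro mult_right_le_one_le sum_nonneg survival_nonneg) auto
  finally have potential_le: "confined_sum lo hi p q n of_int \<le> ?C" .
  have "of_int (hi + 1) * (\<Sum>k<n. exit_top k) \<le> of_int (hi + 1)"
    using exits_top hi_nonneg by (intro mult_left_le) auto
  moreover have "of_int (lo - 1) * (\<Sum>k<n. exit_bottom k) \<le> 0"
    using exits_bottom lo_nonpos by (intro mult_nonpos_nonneg) auto
  ultimately have "(p - q) * (\<Sum>k<n. survival k) \<le> ?C + of_int (hi + 1)"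
    using confined_sum_height[of n] potential_le by linarith
  then show "(\<Sum>k<n. survival k) \<le> (?C + of_int (hi + 1)) / (p - q)"
    using q_less_p by (simp add: field_simps)
qed

lemma exit_sums: "(\<lambda>n. exit_top n + exit_bottom n) sums 1"
proof -
  have "(\<lambda>n. survival n - survival (Suc n)) sums (survival 0 - 0)"
    by (rule telescope_sums'[OF summable_LIMSEQ_zero[OF summable_survival]])
  then show ?thesis by (simp add: survival_Suc confined_sum_0 lo_nonpos hi_nonneg)
qed

lemma exit_martingale_sums:
  "(\<lambda>n. exit_top n * (q / p) powi (hi + 1) + exit_bottom n * (q / p) powi (lo - 1)) sums 1"
proof -
  let ?E = "\<lambda>n. confined_sum lo hi p q n (\<lambda>z. (q / p) powi z)"
  have p_pos: "0 < p" using q_pos q_less_p by simp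
  have harmonic: "p * (q / p) powi (z + 1) + q * (q / p) powi (z - 1) = (q / p) powi z + 0" for z
  proof -
    have "p * (q / p) powi (z + 1) = q * (q / p) powi z"
      "q * (q / p) powi (z - 1) = p * (q / p) powi z"
      using p_pos q_pos by (simp_all add: power_int_add power_int_diff field_simps)
    then show ?thesis using p_plus_q by (simp flip: distrib_right)
  qed
  have E_Suc: "?E (Suc n) = ?E n - exit_top n * (q / p) powi (hi + 1)
      - exit_bottom n * (q / p) powi (lo - 1)" for n
    using confined_sum_Suc[of lo hi p "\<lambda>z. (q / p) powi z" q 0 n] harmonic lo_nonpos hi_nonneg
    by simp
  have "?E \<longlonglongrightarrow> 0"
  proof (rule tendsto_0_le[OF summable_LIMSEQ_zero[OF summable_survival]])
    show "\<forall>\<^sub>F n in sequentially. norm (?E n) \<le>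
        norm (survival n) * (\<Sum>z\<in>{lo..hi}. \<bar>(q / p) powi z\<bar>)"
      using abs_confined_sum_le[of p q lo hi _ "\<lambda>z. (q / p) powi z"] p_pos q_pos survival_nonneg
      by (intro always_eventually) (simp add: mult.commute)
  qed
  then have "(\<lambda>n. ?E n - ?E (Suc n)) sums (?E 0 - 0)" by (rule telescope_sums')
  then show ?thesis by (simp add: E_Suc confined_sum_0 lo_nonpos hi_nonneg)
qed

lemma exit_top_sums:
  "exit_top sums ((1 - (q / p) ^ nat (1 - lo)) / (1 - (q / p) ^ nat (hi - lo + 2)))"
proof -
  define r where "r = q / p"
  have r_pos: "0 < r" and r_less_1: "r < 1" using q_pos q_less_p by (auto simp: r_def)
  have top_le: "norm (exit_top n) \<le> exit_top n + exit_bottom n"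
    and bottom_le: "norm (exit_bottom n) \<le> exit_top n + exit_bottom n" for n
    using exit_top_nonneg[of n] exit_bottom_nonneg[of n] by simp_all
  have "summable exit_top" "summable exit_bottom"
    by (rule summable_comparison_test'[OF sums_summable[OF exit_sums]], rule top_le bottom_le)+
  then have top: "exit_top sums suminf exit_top" and bottom: "exit_bottom sums suminf exit_bottom"
    by (simp_all add: summable_sums)
  define A B where "A = suminf exit_top" and "B = suminf exit_bottom"
  have "A + B = 1"
    using sums_unique2[OF exit_sums sums_add[OF top bottom]] by (simp add: A_def B_def)
  moreover have "A * r powi (hi + 1) + B * r powi (lo - 1) = 1"
    using sums_unique2[OF exit_martingale_sums sums_add[OF sums_mult2[OF top] sums_mult2[OF bottom]]]
    by (simp add: A_def B_def r_def)
  then have "A * (r powi (hi + 1) * r powi (1 - lo)) + B * (r powi (lo - 1) * r powi (1 - lo))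
      = r powi (1 - lo)"
    by (metis (no_types) mult_1 distrib_right mult.assoc)
  then have "A * r powi (hi - lo + 2) + B = r powi (1 - lo)"
    using r_pos by (simp add: algebra_simps flip: power_int_add)
  then have "A * r ^ nat (hi - lo + 2) + B = r ^ nat (1 - lo)"
    using lo_nonpos hi_nonneg by (simp add: power_int_def)
  ultimately have "A * (1 - r ^ nat (hi - lo + 2)) = 1 - r ^ nat (1 - lo)"
    by (simp add: algebra_simps)
  moreover have "r ^ nat (hi - lo + 2) < 1"
    using r_pos r_less_1 lo_nonpos hi_nonneg by (simp add: power_less_one_iff)
  ultimately have "A = (1 - r ^ nat (1 - lo)) / (1 - r ^ nat (hi - lo + 2))"
    by (simp add: field_simps)
  with top show ?thesis by (simp add: A_def r_def)
qed

end

lemma path_pt_in_window_iff: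
  "fst (path_pt ps k) - 2 < snd (path_pt ps k) \<and> snd (path_pt ps k) < fst (path_pt ps k) + int d
     \<longleftrightarrow> height (take k ps) \<in> {-1..int d - 1}"
  unfolding path_pt_def height_def by auto

lemma G_paths_eq:
  assumes "d \<ge> 1"
  shows "G_paths d s = (\<lambda>ps. ps @ [True]) ` confined_paths (-1) (int d - 1) (2 * s + d - 1) (int d - 1)"
proof (intro equalityI subsetI)
  fix ps assume "ps \<in> G_paths d s"
  then have len: "length ps = 2 * s + d" and end_pt: "path_pt ps (length ps) = (int s, int (s + d))"
    and window: "\<And>k. k < length ps \<Longrightarrow> height (take k ps) \<in> {-1..int d - 1}"
    unfolding G_paths_def path_pt_in_window_iff by auto
  obtain xs b where ps_eq: "ps = xs @ [b]"
    using len assms by (metis add_is_0 length_0_conv not_one_le_zero rev_exhaust)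
  have "stays_in (-1) (int d - 1) xs"
    unfolding stays_in_def using window by (auto simp: ps_eq)
  moreover have "height ps = int d"
    using end_pt unfolding path_pt_def height_def by auto
  moreover have "height xs \<le> int d - 1"
    using window[of "length xs"] by (simp add: ps_eq)
  ultimately have "b" "xs \<in> confined_paths (-1) (int d - 1) (2 * s + d - 1) (int d - 1)"
    using len by (auto simp: ps_eq height_snoc confined_paths_def split: if_splits)
  then show "ps \<in> (\<lambda>ps. ps @ [True]) ` confined_paths (-1) (int d - 1) (2 * s + d - 1) (int d - 1)"
    by (simp add: ps_eq)
next
  fix ps
  assume "ps \<in> (\<lambda>ps. ps @ [True]) ` confined_paths (-1) (int d - 1) (2 * s + d - 1) (int d - 1)"
  then obtain xs where ps_eq: "ps = xs @ [True]"
    and xs: "xs \<in> confined_paths (-1) (int d - 1) (2 * s + d - 1) (int d - 1)" by blast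
  have "int (length (filter Not xs)) = int s" "int (length (filter id xs)) = int s + int d - 1"
    using xs length_eq_height[of xs] assms
    by (auto simp: confined_paths_def height_def)
  then have "path_pt ps (length ps) = (int s, int (s + d))"
    by (simp add: ps_eq path_pt_def)
  moreover have "height (take k ps) \<in> {-1..int d - 1}" if "k < length ps" for k
    using xs that unfolding confined_paths_def stays_in_def by (auto simp: ps_eq)
  ultimately show "ps \<in> G_paths d s"
    using xs assms unfolding G_paths_def path_pt_in_window_iff by (auto simp: ps_eq confined_paths_def)
qed

lemma confined_weight_nonzero_length:
  "confined_weight lo hi p q n z \<noteq> 0 \<Longrightarrow> \<exists>k. int n = 2 * int k + z"
proof -
  assume "confined_weight lo hi p q n z \<noteq> 0"
  then have "confined_paths lo hi n z \<noteq> {}" unfolding confined_weight_def by auto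
  then obtain ps where "ps \<in> confined_paths lo hi n z" by blast
  then show ?thesis
    using length_eq_height[of ps] by (auto simp: confined_paths_def)
qed

lemma confined_weight_G:
  assumes "d \<ge> 1"
  shows "p * confined_weight (-1) (int d - 1) p q (2 * s + d - 1) (int d - 1) =
    real (G d s) * p ^ d * (p * q) ^ s"
proof -
  have inj: "inj_on (\<lambda>ps. ps @ [True]) A" for A by (auto simp: inj_on_def)
  have "p * confined_weight (-1) (int d - 1) p q (2 * s + d - 1) (int d - 1) =
      (\<Sum>ps\<in>G_paths d s. path_weight p q ps)"
    unfolding G_paths_eq[OF assms] confined_weight_def
    by (simp add: sum.reindex[OF inj] path_weight_snoc sum_distrib_left mult.commute)
  also have "\<dots> = (\<Sum>ps\<in>G_paths d s. p ^ (s + d) * q ^ s)"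
  proof (rule sum.cong[OF refl])
    fix ps assume "ps \<in> G_paths d s"
    then have "length (filter Not ps) = s" "length (filter id ps) = s + d"
      unfolding G_paths_def path_pt_def by auto
    then show "path_weight p q ps = p ^ (s + d) * q ^ s" by (simp add: path_weight_def)
  qed
  also have "\<dots> = real (G d s) * p ^ d * (p * q) ^ s"
    by (simp add: G_def power_add power_mult_distrib algebra_simps)
  finally show ?thesis .
qed

lemma divide_one_minus_ratio_powers:
  fixes x y :: real
  assumes "y \<noteq> 0"
  shows "(1 - (x / y) ^ 2) / (1 - (x / y) ^ (d + 2)) / y ^ d =
    (y ^ 2 - x ^ 2) / (y ^ (d + 2) - x ^ (d + 2))"
proof -
  have cancel: "(A / y ^ 2) / (B / (y ^ 2 * y ^ d)) / y ^ d = A / B" for A B :: real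
    using assms by (simp add: field_simps)
  have "1 - (x / y) ^ k = (y ^ k - x ^ k) / y ^ k" for k
    using assms by (simp add: power_divide diff_divide_distrib)
  moreover have "y ^ (d + 2) = y ^ 2 * y ^ d" by (rule power_add[THEN trans, OF mult.commute])
  ultimately show ?thesis by (simp only: cancel)
qed

lemma G_generating_function:
  fixes \<alpha> :: real
  assumes "d \<ge> 1" "0 < \<alpha>" "\<alpha> < 1/2"
  shows "(\<lambda>s. real (G d s) * (\<alpha> * (1 - \<alpha>)) ^ s) sums
    ((1 - 2 * \<alpha>) / ((1 - \<alpha>) ^ (d + 2) - \<alpha> ^ (d + 2)))"
proof -
  define p where "p = 1 - \<alpha>"
  let ?w = "\<lambda>n. p * confined_weight (-1) (int d - 1) p \<alpha> n (int d - 1)"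
  let ?X = "(1 - (\<alpha> / p) ^ 2) / (1 - (\<alpha> / p) ^ (d + 2))"
  have w_sums: "?w sums ?X"
    using exit_top_sums[of "-1" "int d - 1" \<alpha> p] assms by (simp add: p_def nat_add_distrib)
  have mono: "strict_mono (\<lambda>s. 2 * s + d - 1)"
    using assms(1) by (auto simp: strict_mono_def)
  have "?w n = 0" if "n \<notin> range (\<lambda>s. 2 * s + d - 1)" for n
  proof (rule ccontr)
    assume "?w n \<noteq> 0"
    then obtain k where "int n = 2 * int k + (int d - 1)"
      using confined_weight_nonzero_length by fastforce
    then have "n = 2 * k + d - 1" using assms(1) by linarith
    with that show False by blast
  qed
  then have "(\<lambda>s. ?w (2 * s + d - 1)) sums ?X"
    using sums_mono_reindex[of "\<lambda>s. 2 * s + d - 1" ?w ?X] mono w_sums by blast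
  then have "(\<lambda>s. real (G d s) * (p * \<alpha>) ^ s * p ^ d / p ^ d) sums (?X / p ^ d)"
    unfolding confined_weight_G[OF assms(1)] by (intro sums_divide) (simp add: mult_ac)
  moreover have "?X / p ^ d = (1 - 2 * \<alpha>) / ((1 - \<alpha>) ^ (d + 2) - \<alpha> ^ (d + 2))"
    using divide_one_minus_ratio_powers[of p \<alpha> d] assms
    by (simp add: p_def power2_eq_square algebra_simps)
  ultimately show ?thesis using assms by (simp add: p_def mult.commute)
qed

lemma index_powser_sums_from_reparametrization:
  fixes c :: "nat \<Rightarrow> real"
  assumes sums_f: "\<And>b. 0 < b \<Longrightarrow> b < 1/2 \<Longrightarrow> (\<lambda>n. c n * (b * (1 - b)) ^ n) sums f b"
    and f_deriv: "(f has_field_derivative f') (at \<alpha>)" and "0 < \<alpha>" "\<alpha> < 1/2"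
  shows "(\<lambda>n. real n * c n * (\<alpha> * (1 - \<alpha>)) ^ n) sums (\<alpha> * (1 - \<alpha>) * f' / (1 - 2 * \<alpha>))"
proof -
  define x where "x = \<alpha> * (1 - \<alpha>)"
  \<comment> \<open>Any \<beta> in (\<alpha>, 1/2) gives convergence at K > x, hence termwise differentiability at x.\<close>
  define \<beta> where "\<beta> = (\<alpha> + 1/2) / 2"
  define K where "K = \<beta> * (1 - \<beta>)"
  define F where "F y = (\<Sum>n. c n * y ^ n)" for y
  define F' where "F' = (\<Sum>n. diffs c n * x ^ n)"
  have x_pos: "0 < x" using assms by (simp add: x_def)
  have "x < K"
  proof -
    have "K - x = (\<beta> - \<alpha>) * (1 - \<alpha> - \<beta>)" by (simp add: K_def x_def algebra_simps)
    moreover have "0 < (\<beta> - \<alpha>) * (1 - \<alpha> - \<beta>)"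
      using assms by (intro mult_pos_pos) (auto simp: \<beta>_def)
    ultimately show ?thesis by linarith
  qed
  have summable_K: "summable (\<lambda>n. c n * K ^ n)"
    using sums_f[of \<beta>] assms by (auto simp: K_def \<beta>_def sums_iff)
  have "summable (\<lambda>n. diffs c n * x ^ n)"
  proof (rule termdiff_converges[of x K])
    show "summable (\<lambda>n. c n * y ^ n)" if "norm y < K" for y
      by (rule powser_inside[OF summable_K]) (use that x_pos \<open>x < K\<close> in auto)
  qed (use x_pos \<open>x < K\<close> in auto)
  then have "(\<lambda>n. diffs c n * x ^ n * x) sums (F' * x)"
    unfolding F'_def by (intro sums_mult2 summable_sums)
  then have "(\<lambda>n. real n * c n * x ^ n) sums (x * F')"
    using sums_Suc_iff[of "\<lambda>n. real n * c n * x ^ n"] by (simp add: diffs_def mult_ac)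
  moreover have "F' * (1 - 2 * \<alpha>) = f'"
  proof (rule DERIV_unique[OF _ f_deriv])
    have "(F has_field_derivative F') (at (\<alpha> * (1 - \<alpha>)))"
      unfolding F_def F'_def x_def[symmetric]
      by (rule termdiffs_strong[OF summable_K]) (use x_pos \<open>x < K\<close> in simp)
    moreover have "((\<lambda>b. b * (1 - b)) has_field_derivative 1 - 2 * \<alpha>) (at \<alpha>)"
      by (auto intro!: derivative_eq_intros)
    ultimately have "((\<lambda>b. F (b * (1 - b))) has_field_derivative F' * (1 - 2 * \<alpha>)) (at \<alpha>)"
      by (rule DERIV_chain2)
    then show "(f has_field_derivative F' * (1 - 2 * \<alpha>)) (at \<alpha>)"
    proof (rule has_field_derivative_transform_within_open)
      show "F (b * (1 - b)) = f b" if "b \<in> {0<..<1/2}" for b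
        using sums_f[of b] that by (simp add: F_def sums_iff)
    qed (use assms in auto)
  qed
  then have "x * F' = \<alpha> * (1 - \<alpha>) * f' / (1 - 2 * \<alpha>)"
    using assms by (simp add: x_def eq_divide_eq)
  ultimately show ?thesis by (simp add: x_def)
qed

lemma G_index_generating_function:
  fixes \<alpha> :: real
  assumes "d \<ge> 1" "0 < \<alpha>" "\<alpha> < 1/2"
  shows "(\<lambda>s. real s * real (G d s) * (\<alpha> * (1 - \<alpha>)) ^ s) sums
    ((real d + 2) * \<alpha> * (1 - \<alpha>) * ((1 - \<alpha>) ^ (d + 1) + \<alpha> ^ (d + 1))
       / ((1 - \<alpha>) ^ (d + 2) - \<alpha> ^ (d + 2)) ^ 2
     - 2 * \<alpha> * (1 - \<alpha>) / ((1 - 2 * \<alpha>) * ((1 - \<alpha>) ^ (d + 2) - \<alpha> ^ (d + 2))))"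
proof -
  define D where "D a = (1 - a) ^ (d + 2) - a ^ (d + 2)" for a :: real
  define D' where "D' = - (real d + 2) * ((1 - \<alpha>) ^ (d + 1) + \<alpha> ^ (d + 1))"
  have "(D has_field_derivative D') (at \<alpha>)"
    unfolding D_def[abs_def] D'_def
    by (rule derivative_eq_intros refl)+ (simp add: algebra_simps)
  moreover have "\<alpha> ^ (d + 2) < (1 - \<alpha>) ^ (d + 2)"
    using assms by (intro power_strict_mono) auto
  then have "D \<alpha> \<noteq> 0" by (simp add: D_def)
  ultimately have "((\<lambda>a. (1 - 2 * a) / D a) has_field_derivative
      (- 2 * D \<alpha> - (1 - 2 * \<alpha>) * D') / (D \<alpha> * D \<alpha>)) (at \<alpha>)"
    by (auto intro!: derivative_eq_intros)
  then have sums: "(\<lambda>s. real s * real (G d s) * (\<alpha> * (1 - \<alpha>)) ^ s) sums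
      (\<alpha> * (1 - \<alpha>) * ((- 2 * D \<alpha> - (1 - 2 * \<alpha>) * D') / (D \<alpha> * D \<alpha>)) / (1 - 2 * \<alpha>))"
    using G_generating_function[OF assms(1)] assms
    by (intro index_powser_sums_from_reparametrization) (auto simp: D_def)
  have field_identity: "x * y * ((- 2 * E - u * (- k * S)) / (E * E)) / u =
      k * x * y * S / E ^ 2 - 2 * x * y / (u * E)"
    if "u \<noteq> 0" "E \<noteq> 0" for x y u k S E :: real
    using that by (simp add: field_simps power2_eq_square)
  have "1 - 2 * \<alpha> \<noteq> 0" using assms by simp
  from this \<open>D \<alpha> \<noteq> 0\<close> have "\<alpha> * (1 - \<alpha>) * ((- 2 * D \<alpha> - (1 - 2 * \<alpha>) * D') / (D \<alpha> * D \<alpha>)) / (1 - 2 * \<alpha>)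
    = (real d + 2) * \<alpha> * (1 - \<alpha>) * ((1 - \<alpha>) ^ (d + 1) + \<alpha> ^ (d + 1))
       / ((1 - \<alpha>) ^ (d + 2) - \<alpha> ^ (d + 2)) ^ 2
     - 2 * \<alpha> * (1 - \<alpha>) / ((1 - 2 * \<alpha>) * ((1 - \<alpha>) ^ (d + 2) - \<alpha> ^ (d + 2)))"
    unfolding D'_def D_def by (rule field_identity)
  with sums show ?thesis by simp
qed

theorem lemma3:
  fixes d :: nat and \<alpha> :: real
  assumes "d \<ge> 1" and "0 < \<alpha>" and "\<alpha> < 1/2"
  shows "((\<lambda>s. real (G d s) * (\<alpha> * (1 - \<alpha>)) ^ s) sums
            ((1 - 2 * \<alpha>) / ((1 - \<alpha>) ^ (d + 2) - \<alpha> ^ (d + 2))))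
     \<and> ((\<lambda>s. real s * real (G d s) * (\<alpha> * (1 - \<alpha>)) ^ s) sums
            ((real d + 2) * \<alpha> * (1 - \<alpha>) * ((1 - \<alpha>) ^ (d + 1) + \<alpha> ^ (d + 1))
               / ((1 - \<alpha>) ^ (d + 2) - \<alpha> ^ (d + 2)) ^ 2
             - 2 * \<alpha> * (1 - \<alpha>) / ((1 - 2 * \<alpha>) * ((1 - \<alpha>) ^ (d + 2) - \<alpha> ^ (d + 2)))))"
  using G_generating_function[OF assms] G_index_generating_function[OF assms] by blast

end
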